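(* Let $n$ be a positive multiple of $3$ and $0\le m\le n/3$ an integer. Let $\mathcal{G}(n,m)$ be the $3$-graph defined in the context. Then the number $\varphi(n,m)$ of $4$-subsets of $[n]$ that induce exactly three edges in $\mathcal{G}(n,m)$ (i.e. induced copies of $K_4^{3-}$) equals $$\varphi(n,m)=\frac{1}{6}m^2(n-3m)(n-3m-3).$$
   Context: Let $[n]=V_1\cup V_2\cup V_3$ be a partition with $|V_j|=n/3$, and for $j\in[3]$ let $V_j=V_{1,j}\cup V_{2,j}$ be a partition with $|V_{1,j}|=m$ and $|V_{2,j}|=n/3-m$. Indices $j$ are taken modulo $3$. The $3$-graph $\mathcal{G}(n,m)$ on $[n]$ has as edges all triples $\{a,b,c\}$ of distinct vertices of the following forms: (1) $a,b,c\in V_{i,j}$ for some $i\in[2]$, $j\in[3]$; (2) $a,b\in V_{1,j}$, $c\in V_{2,j}$; (3) $a,b\in V_{1,j}$, $c\in V_{j+1}$; (4) $a,b\in V_{2,j}$, $c\in V_{1,j+1}$; (5) $a,b\in V_{2,j}$, $c\in V_{j-1}$; (6) $a\in V_{1,j}$, $b\in V_{2,j}$, $c\in V_{j+1}$ (for some $j\in[3]$). $K_4^{3-}$ denotes the $3$-graph on four vertices with three edges. *)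

theory Defs
  imports Complex_Main
begin

text \<open>A vertex v of [n] = {1..n} carries a label lab v = (i, j) with i in {1,2}
  and j in {0,1,2}, meaning v belongs to V_{i,j}. The index j of the paper
  (taken modulo 3) is represented by j mod 3 in {0,1,2}.\<close>

definition valid_labelling :: "nat \<Rightarrow> nat \<Rightarrow> (nat \<Rightarrow> nat \<times> nat) \<Rightarrow> bool" where
  "valid_labelling n m lab \<longleftrightarrow>
     (\<forall>v\<in>{1..n}. fst (lab v) \<in> {1,2} \<and> snd (lab v) \<in> {0,1,2}) \<and>
     (\<forall>j\<in>{0,1,2::nat}. card {v\<in>{1..n}. lab v = (1,j)} = m \<and>
                       card {v\<in>{1..n}. lab v = (2,j)} = n div 3 - m)"

definition edge_form :: "(nat \<Rightarrow> nat \<times> nat) \<Rightarrow> nat \<Rightarrow> nat \<Rightarrow> nat \<Rightarrow> bool" where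
  "edge_form lab a b c \<longleftrightarrow>
     (\<exists>i j. lab a = (i,j) \<and> lab b = (i,j) \<and> lab c = (i,j)) \<or>
     (\<exists>j. lab a = (1,j) \<and> lab b = (1,j) \<and> lab c = (2,j)) \<or>
     (\<exists>j. lab a = (1,j) \<and> lab b = (1,j) \<and> snd (lab c) = (j+1) mod 3) \<or>
     (\<exists>j. lab a = (2,j) \<and> lab b = (2,j) \<and> lab c = (1, (j+1) mod 3)) \<or>
     (\<exists>j. lab a = (2,j) \<and> lab b = (2,j) \<and> snd (lab c) = (j+2) mod 3) \<or>
     (\<exists>j. lab a = (1,j) \<and> lab b = (2,j) \<and> snd (lab c) = (j+1) mod 3)"

definition is_edge :: "nat \<Rightarrow> (nat \<Rightarrow> nat \<times> nat) \<Rightarrow> nat set \<Rightarrow> bool" where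
  "is_edge n lab e \<longleftrightarrow> e \<subseteq> {1..n} \<and>
     (\<exists>a b c. e = {a,b,c} \<and> a \<noteq> b \<and> a \<noteq> c \<and> b \<noteq> c \<and> edge_form lab a b c)"

definition phi :: "nat \<Rightarrow> (nat \<Rightarrow> nat \<times> nat) \<Rightarrow> nat" where
  "phi n lab = card {S. S \<subseteq> {1..n} \<and> card S = 4 \<and>
                        card {e. e \<subseteq> S \<and> is_edge n lab e} = 3}"

end

theory Submission
  imports Defs
begin

text \<open>Whether three vertices of G(n,m) form an edge depends only on their labels (i,j),
  so the number of edges inside a 4-set is a function of the labels of its vertices.
  Running through all label quadruples shows that a 4-set spans exactly three edges iff,
  for some j, it has one vertex in V_{1,j}, one in V_{1,j+1} and two in V_{2,j}; this j
  is then unique. For each of the three values of j there are m * m * C(n/3 - m, 2) such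
  sets, and 3 m^2 C(n/3 - m, 2) = m^2 (n - 3m) (n - 3m - 3) / 6.\<close>

lemma card_filter_distinct:
  "distinct xs \<Longrightarrow> card {x \<in> set xs. P x} = (\<Sum>x\<leftarrow>xs. of_bool (P x))"
proof (induction xs)
  case (Cons a xs)
  then have "{x \<in> set (a # xs). P x} =
      (if P a then insert a {x \<in> set xs. P x} else {x \<in> set xs. P x})"
    by auto
  with Cons show ?case by simp
qed simp

lemma card_filter_distinct_count_list:
  assumes "distinct xs"
  shows "card {x \<in> set xs. f x = y} = count_list (map f xs) y"
proof -
  have "count_list (map f xs) y = (\<Sum>x\<leftarrow>xs. of_bool (f x = y))"
    by (induction xs) auto
  with assms show ?thesis
    by (simp add: card_filter_distinct)
qed

lemma ex_enumeration_of_triple: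
  assumes "distinct [a,b,c]"
  shows "(\<exists>x y z. {a,b,c} = {x,y,z} \<and> x \<noteq> y \<and> x \<noteq> z \<and> y \<noteq> z \<and> P x y z) \<longleftrightarrow>
         P a b c \<or> P a c b \<or> P b a c \<or> P b c a \<or> P c a b \<or> P c b a"
proof
  assume "\<exists>x y z. {a,b,c} = {x,y,z} \<and> x \<noteq> y \<and> x \<noteq> z \<and> y \<noteq> z \<and> P x y z"
  then obtain x y z where xyz: "{a,b,c} = {x,y,z}" "x \<noteq> y" "x \<noteq> z" "y \<noteq> z" "P x y z"
    by blast
  then have "x \<in> {a,b,c}" "y \<in> {a,b,c}" "z \<in> {a,b,c}"
    by blast+
  with xyz(2-5) show "P a b c \<or> P a c b \<or> P b a c \<or> P b c a \<or> P c a b \<or> P c b a"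
    by auto
next
  assume "P a b c \<or> P a c b \<or> P b a c \<or> P b c a \<or> P c a b \<or> P c b a"
  with assms show "\<exists>x y z. {a,b,c} = {x,y,z} \<and> x \<noteq> y \<and> x \<noteq> z \<and> y \<noteq> z \<and> P x y z"
    by (auto simp: insert_commute)
qed

lemma card_Suc_subset_Diff_singleton:
  assumes "finite S" "e \<subseteq> S" "card S = Suc (card e)"
  obtains w where "w \<in> S" "e = S - {w}"
proof -
  have "card (S - e) = 1"
    using assms by (simp add: card_Diff_subset finite_subset)
  then obtain w where "S - e = {w}"
    by (auto simp: card_Suc_eq)
  with assms(2) show ?thesis
    using that by blast
qed

lemma sum_card_fibres_le:
  assumes "finite S" "finite Ls"
  shows "(\<Sum>L\<in>Ls. card {v\<in>S. f v = L}) \<le> card S"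
proof -
  have "(\<Sum>L\<in>Ls. card {v\<in>S. f v = L}) = card (\<Union>L\<in>Ls. {v\<in>S. f v = L})"
    using assms by (intro card_UN_disjoint[symmetric]) auto
  also have "\<dots> \<le> card S"
    using assms(1) by (intro card_mono) auto
  finally show ?thesis .
qed

lemma card_Un3_disjoint:
  assumes "finite A" "finite B" "finite C" "A \<inter> B = {}" "A \<inter> C = {}" "B \<inter> C = {}"
  shows "card (A \<union> B \<union> C) = card A + card B + card C"
  using assms by (simp add: card_Un_disjoint Int_Un_distrib2)

lemma card_subsets_by_label_counts:
  assumes "finite V" and "x \<noteq> y" "x \<noteq> z" "y \<noteq> z"
  shows "card {S. S \<subseteq> V \<and> card S = p + q + r \<and> card {v\<in>S. f v = x} = p \<and>
                card {v\<in>S. f v = y} = q \<and> card {v\<in>S. f v = z} = r}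
       = (card {v\<in>V. f v = x} choose p) * (card {v\<in>V. f v = y} choose q) *
         (card {v\<in>V. f v = z} choose r)"
proof -
  define X Y Z where "X = {v\<in>V. f v = x}" and "Y = {v\<in>V. f v = y}" and "Z = {v\<in>V. f v = z}"
  have fin: "finite X" "finite Y" "finite Z"
    using assms(1) unfolding X_def Y_def Z_def by auto
  have disj: "X \<inter> Y = {}" "X \<inter> Z = {}" "Y \<inter> Z = {}"
    using assms(2-4) unfolding X_def Y_def Z_def by auto
  have fibre: "{v\<in>S. f v = x} = S \<inter> X" "{v\<in>S. f v = y} = S \<inter> Y" "{v\<in>S. f v = z} = S \<inter> Z"
    if "S \<subseteq> V" for S
    using that unfolding X_def Y_def Z_def by auto
  let ?F = "{S. S \<subseteq> V \<and> card S = p + q + r \<and> card {v\<in>S. f v = x} = p \<and>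
                card {v\<in>S. f v = y} = q \<and> card {v\<in>S. f v = z} = r}"
  let ?P = "{A. A \<subseteq> X \<and> card A = p} \<times> {B. B \<subseteq> Y \<and> card B = q} \<times> {C. C \<subseteq> Z \<and> card C = r}"
  have split: "S \<inter> X \<union> S \<inter> Y \<union> S \<inter> Z = S" if "S \<in> ?F" for S
  proof (rule card_subset_eq)
    show "finite S"
      using that assms(1) finite_subset by blast
    show "S \<inter> X \<union> S \<inter> Y \<union> S \<inter> Z \<subseteq> S"
      by blast
    show "card (S \<inter> X \<union> S \<inter> Y \<union> S \<inter> Z) = card S"
      using that fibre[of S] fin disj by (subst card_Un3_disjoint) auto
  qed
  have "bij_betw (\<lambda>S. (S \<inter> X, S \<inter> Y, S \<inter> Z)) ?F ?P"
  proof (rule bij_betw_byWitness[where f' = "\<lambda>(A, B, C). A \<union> B \<union> C"])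
    show "\<forall>S\<in>?F. (\<lambda>(A, B, C). A \<union> B \<union> C) (S \<inter> X, S \<inter> Y, S \<inter> Z) = S"
      using split by auto
    show "\<forall>T\<in>?P. (\<lambda>S. (S \<inter> X, S \<inter> Y, S \<inter> Z)) ((\<lambda>(A, B, C). A \<union> B \<union> C) T) = T"
      using disj by blast
    show "(\<lambda>S. (S \<inter> X, S \<inter> Y, S \<inter> Z)) ` ?F \<subseteq> ?P"
      using fibre by auto
    show "(\<lambda>(A, B, C). A \<union> B \<union> C) ` ?P \<subseteq> ?F"
    proof clarify
      fix A B C assume ABC: "A \<subseteq> X" "B \<subseteq> Y" "C \<subseteq> Z"
      then have sub: "A \<union> B \<union> C \<subseteq> V"
        unfolding X_def Y_def Z_def by blast
      have "card (A \<union> B \<union> C) = card A + card B + card C"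
        using ABC fin disj by (intro card_Un3_disjoint) (auto intro: finite_subset)
      moreover have "(A \<union> B \<union> C) \<inter> X = A" "(A \<union> B \<union> C) \<inter> Y = B" "(A \<union> B \<union> C) \<inter> Z = C"
        using ABC disj by blast+
      ultimately show "A \<union> B \<union> C \<subseteq> V \<and> card (A \<union> B \<union> C) = card A + card B + card C \<and>
          card {v \<in> A \<union> B \<union> C. f v = x} = card A \<and> card {v \<in> A \<union> B \<union> C. f v = y} = card B \<and>
          card {v \<in> A \<union> B \<union> C. f v = z} = card C"
        using sub unfolding fibre[OF sub] by simp
    qed
  qed
  then have "card ?F = card ?P"
    by (rule bij_betw_same_card)
  then show ?thesis
    using fin unfolding X_def Y_def Z_def by (simp add: card_cartesian_product n_subsets)
qed

lemma of_nat_choose_two: "real (p choose 2) = real p * (real p - 1) / 2"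
  by (induction p) (auto simp: numeral_2_eq_2 field_simps)

definition label_edge :: "nat \<times> nat \<Rightarrow> nat \<times> nat \<Rightarrow> nat \<times> nat \<Rightarrow> bool" where
  "label_edge x y z \<longleftrightarrow>
     (\<exists>i j. x = (i,j) \<and> y = (i,j) \<and> z = (i,j)) \<or>
     (\<exists>j. x = (1,j) \<and> y = (1,j) \<and> z = (2,j)) \<or>
     (\<exists>j. x = (1,j) \<and> y = (1,j) \<and> snd z = (j+1) mod 3) \<or>
     (\<exists>j. x = (2,j) \<and> y = (2,j) \<and> z = (1, (j+1) mod 3)) \<or>
     (\<exists>j. x = (2,j) \<and> y = (2,j) \<and> snd z = (j+2) mod 3) \<or>
     (\<exists>j. x = (1,j) \<and> y = (2,j) \<and> snd z = (j+1) mod 3)"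

definition unordered_label_edge :: "nat \<times> nat \<Rightarrow> nat \<times> nat \<Rightarrow> nat \<times> nat \<Rightarrow> bool" where
  "unordered_label_edge x y z \<longleftrightarrow> label_edge x y z \<or> label_edge x z y \<or> label_edge y x z \<or>
     label_edge y z x \<or> label_edge z x y \<or> label_edge z y x"

lemma label_edge_Pair:
  "label_edge (a,b) (c,d) (e,f) \<longleftrightarrow>
     (a = c \<and> c = e \<and> b = d \<and> d = f) \<or>
     (a = 1 \<and> c = 1 \<and> e = 2 \<and> b = d \<and> d = f) \<or>
     (a = 1 \<and> c = 1 \<and> b = d \<and> f = (b+1) mod 3) \<or>
     (a = 2 \<and> c = 2 \<and> b = d \<and> e = 1 \<and> f = (b+1) mod 3) \<or>
     (a = 2 \<and> c = 2 \<and> b = d \<and> f = (b+2) mod 3) \<or>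
     (a = 1 \<and> c = 2 \<and> b = d \<and> f = (b+1) mod 3)"
  unfolding label_edge_def by auto

lemma three_label_edges_iff:
  assumes "la \<in> {1,2} \<times> {0,1,2}" "lb \<in> {1,2} \<times> {0,1,2}" "lc \<in> {1,2} \<times> {0,1,2}" "ld \<in> {1,2} \<times> {0,1,2}"
  shows "of_bool (unordered_label_edge la lb lc) + of_bool (unordered_label_edge la lb ld) +
      of_bool (unordered_label_edge la lc ld) + of_bool (unordered_label_edge lb lc ld) = (3::nat) \<longleftrightarrow>
    (\<exists>j\<in>{0,1,2}. count_list [la,lb,lc,ld] (1,j) = 1 \<and> count_list [la,lb,lc,ld] (1,(j+1) mod 3) = 1
       \<and> count_list [la,lb,lc,ld] (2,j) = 2)"
proof -
  have labels: "{1,2} \<times> {0,1,2} = {(1,0),(1,1),(1,2),(2,0),(2,1),(2,2::nat)}"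
    by auto
  show ?thesis
    using assms unfolding labels
    by (elim insertE emptyE) (simp_all add: unordered_label_edge_def label_edge_Pair)
qed

lemma edge_form_eq_label_edge: "edge_form lab a b c = label_edge (lab a) (lab b) (lab c)"
  unfolding edge_form_def label_edge_def by simp

lemma is_edge_iff_unordered_label_edge:
  assumes "distinct [a,b,c]" "{a,b,c} \<subseteq> {1..n}"
  shows "is_edge n lab {a,b,c} \<longleftrightarrow> unordered_label_edge (lab a) (lab b) (lab c)"
  using assms unfolding is_edge_def ex_enumeration_of_triple[OF assms(1)]
  by (simp add: edge_form_eq_label_edge unordered_label_edge_def)

lemma card_edges_in_4set:
  assumes "distinct [a,b,c,d]" "{a,b,c,d} \<subseteq> {1..n}"
  shows "card {e. e \<subseteq> {a,b,c,d} \<and> is_edge n lab e} =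
     of_bool (unordered_label_edge (lab a) (lab b) (lab c)) +
     of_bool (unordered_label_edge (lab a) (lab b) (lab d)) +
     of_bool (unordered_label_edge (lab a) (lab c) (lab d)) +
     of_bool (unordered_label_edge (lab b) (lab c) (lab d))"
proof -
  let ?T = "[{a,b,c}, {a,b,d}, {a,c,d}, {b,c,d}]"
  have "card {e. e \<subseteq> {a,b,c,d} \<and> is_edge n lab e} = card {e \<in> set ?T. is_edge n lab e}"
  proof (rule arg_cong[where f = card], safe)
    fix e assume e: "e \<subseteq> {a,b,c,d}" "is_edge n lab e"
    have "finite {a,b,c,d}"
      by simp
    moreover have "card {a,b,c,d} = Suc (card e)"
      using assms(1) e(2) by (auto simp: is_edge_def)
    ultimately obtain w where "w \<in> {a,b,c,d}" "e = {a,b,c,d} - {w}"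
      using e(1) card_Suc_subset_Diff_singleton by blast
    with assms(1) show "e \<in> set ?T"
      by auto
  qed (auto simp: is_edge_def)
  also have "\<dots> = (\<Sum>e\<leftarrow>?T. of_bool (is_edge n lab e))"
    using assms(1) by (intro card_filter_distinct) (auto simp: insert_eq_iff)
  also have "\<dots> = of_bool (unordered_label_edge (lab a) (lab b) (lab c)) +
     of_bool (unordered_label_edge (lab a) (lab b) (lab d)) +
     of_bool (unordered_label_edge (lab a) (lab c) (lab d)) +
     of_bool (unordered_label_edge (lab b) (lab c) (lab d))"
    using assms by (simp add: is_edge_iff_unordered_label_edge add.assoc)
  finally show ?thesis .
qed

definition K4_minus_shape :: "(nat \<Rightarrow> nat \<times> nat) \<Rightarrow> nat \<Rightarrow> nat set \<Rightarrow> bool" where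
  "K4_minus_shape lab j S \<longleftrightarrow>
     card {v\<in>S. lab v = (1,j)} = 1 \<and> card {v\<in>S. lab v = (1,(j+1) mod 3)} = 1 \<and>
     card {v\<in>S. lab v = (2,j)} = 2"

lemma valid_labelling_range:
  "valid_labelling n m lab \<Longrightarrow> v \<in> {1..n} \<Longrightarrow> lab v \<in> {1,2} \<times> {0,1,2}"
  unfolding valid_labelling_def mem_Times_iff by blast

lemma three_edges_iff_K4_minus_shape:
  assumes "valid_labelling n m lab" "S \<subseteq> {1..n}" "card S = 4"
  shows "card {e. e \<subseteq> S \<and> is_edge n lab e} = 3 \<longleftrightarrow> (\<exists>j\<in>{0,1,2}. K4_minus_shape lab j S)"
proof -
  obtain a b c d where S: "S = set [a,b,c,d]" "distinct [a,b,c,d]"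
    using assms(3) by (auto simp: card_Suc_eq numeral_eq_Suc)
  have range: "lab v \<in> {1,2} \<times> {0,1,2}" if "v \<in> S" for v
    using valid_labelling_range assms(1,2) that by blast
  have "card {e. e \<subseteq> S \<and> is_edge n lab e} = 3 \<longleftrightarrow>
      of_bool (unordered_label_edge (lab a) (lab b) (lab c)) +
      of_bool (unordered_label_edge (lab a) (lab b) (lab d)) +
      of_bool (unordered_label_edge (lab a) (lab c) (lab d)) +
      of_bool (unordered_label_edge (lab b) (lab c) (lab d)) = (3::nat)"
    using assms(2) S by (simp add: card_edges_in_4set)
  also have "\<dots> \<longleftrightarrow> (\<exists>j\<in>{0,1,2}. count_list [lab a, lab b, lab c, lab d] (1,j) = 1 \<and>
      count_list [lab a, lab b, lab c, lab d] (1,(j+1) mod 3) = 1 \<and>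
      count_list [lab a, lab b, lab c, lab d] (2,j) = 2)"
    using range S(1) by (intro three_label_edges_iff) auto
  also have "\<dots> \<longleftrightarrow> (\<exists>j\<in>{0,1,2}. K4_minus_shape lab j S)"
    by (simp only: K4_minus_shape_def S(1) card_filter_distinct_count_list[OF S(2)] list.map)
  finally show ?thesis .
qed

lemma K4_minus_shape_unique:
  assumes "finite S" "card S = 4" "K4_minus_shape lab j S" "K4_minus_shape lab k S"
  shows "j = k"
proof (rule ccontr)
  assume "j \<noteq> k"
  then have "(\<Sum>L\<in>{(1,j),(2,j),(2,k)}. card {v\<in>S. lab v = L}) = 5"
    using assms(3,4) unfolding K4_minus_shape_def by simp
  with sum_card_fibres_le[OF assms(1), of "{(1,j),(2,j),(2,k)}" lab] assms(2) show False
    by simp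
qed

lemma card_K4_minus_shape:
  assumes "valid_labelling n m lab" "j \<in> {0,1,2}"
  shows "card {S. S \<subseteq> {1..n} \<and> card S = 4 \<and> K4_minus_shape lab j S} =
           m * m * ((n div 3 - m) choose 2)"
proof -
  have next_part: "(j+1) mod 3 \<in> {0,1,2}" "(j+1) mod 3 \<noteq> j"
    using assms(2) by auto
  have classes: "card {v\<in>{1..n}. lab v = (1,i)} = m" "card {v\<in>{1..n}. lab v = (2,i)} = n div 3 - m"
    if "i \<in> {0,1,2}" for i
    using assms(1) that unfolding valid_labelling_def by blast+
  have four: "1 + 1 + 2 = (4::nat)"
    by simp
  have "card {S. S \<subseteq> {1..n} \<and> card S = 4 \<and> K4_minus_shape lab j S} =
    card {S. S \<subseteq> {1..n} \<and> card S = 1 + 1 + 2 \<and> card {v\<in>S. lab v = (1,j)} = 1 \<and>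
        card {v\<in>S. lab v = (1,(j+1) mod 3)} = 1 \<and> card {v\<in>S. lab v = (2,j)} = 2}"
    by (simp only: K4_minus_shape_def four)
  also have "\<dots> = (card {v\<in>{1..n}. lab v = (1,j)} choose 1) *
      (card {v\<in>{1..n}. lab v = (1,(j+1) mod 3)} choose 1) * (card {v\<in>{1..n}. lab v = (2,j)} choose 2)"
    using next_part(2) by (intro card_subsets_by_label_counts) auto
  also have "\<dots> = m * m * ((n div 3 - m) choose 2)"
    using classes[OF assms(2)] classes[OF next_part(1)] by simp
  finally show ?thesis .
qed

lemma phi_eq_sum_K4_minus_shape:
  assumes "valid_labelling n m lab"
  shows "phi n lab = (\<Sum>j\<in>{0,1,2}. card {S. S \<subseteq> {1..n} \<and> card S = 4 \<and> K4_minus_shape lab j S})"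
proof -
  define K where "K j = {S. S \<subseteq> {1..n} \<and> card S = 4 \<and> K4_minus_shape lab j S}" for j
  have "{S. S \<subseteq> {1..n} \<and> card S = 4 \<and> card {e. e \<subseteq> S \<and> is_edge n lab e} = 3} =
      (\<Union>j\<in>{0,1,2}. K j)"
    unfolding K_def using three_edges_iff_K4_minus_shape[OF assms] by auto
  then have "phi n lab = card (\<Union>j\<in>{0,1,2}. K j)"
    unfolding phi_def by simp
  also have "\<dots> = (\<Sum>j\<in>{0,1,2}. card (K j))"
  proof (rule card_UN_disjoint)
    show "\<forall>j\<in>{0,1,2}. finite (K j)"
      unfolding K_def by (auto intro: finite_subset[of _ "Pow {1..n}"])
    show "\<forall>j\<in>{0,1,2}. \<forall>k\<in>{0,1,2}. j \<noteq> k \<longrightarrow> K j \<inter> K k = {}"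
    proof (intro ballI impI equals0I)
      fix j k S
      assume "j \<noteq> k" "S \<in> K j \<inter> K k"
      then have "S \<subseteq> {1..n}" "card S = 4" "K4_minus_shape lab j S" "K4_minus_shape lab k S"
        unfolding K_def by auto
      with \<open>j \<noteq> k\<close> show False
        using K4_minus_shape_unique finite_subset[OF _ finite_atLeastAtMost] by metis
    qed
  qed simp
  finally show ?thesis
    unfolding K_def .
qed

theorem lemma2p1:
  fixes n m :: nat and lab :: "nat \<Rightarrow> nat \<times> nat"
  assumes "n > 0" and "3 dvd n" and "m \<le> n div 3"
    and "valid_labelling n m lab"
  shows "real (phi n lab) =
           (real m)^2 * (real n - 3 * real m) * (real n - 3 * real m - 3) / 6"
proof -
  define p where "p = n div 3 - m"
  have phi_eq: "phi n lab = 3 * (m * m * (p choose 2))"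
    unfolding phi_eq_sum_K4_minus_shape[OF assms(4)] p_def
    using card_K4_minus_shape[OF assms(4)] by simp
  have "real n - 3 * real m = 3 * real p"
    using assms(2,3) unfolding p_def by (auto simp: of_nat_diff)
  then show ?thesis
    unfolding phi_eq by (simp add: of_nat_choose_two power2_eq_square field_simps)
qed

end
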